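(* For $\lambda\in\mathbb C$ let $T_\lambda=\begin{bmatrix}0&1&0\\0&0&0\\0&0&\lambda\end{bmatrix}\in M_3(\mathbb C)$. Then $C^*_e(\mathcal S_{T_\lambda})\cong M_2(\mathbb C)$ if $|\lambda|\le 1/2$, and $C^*_e(\mathcal S_{T_\lambda})\cong M_2(\mathbb C)\oplus\mathbb C$ if $|\lambda|>1/2$.
   Context: $\mathcal S_T=\mathrm{span}\{1,T,T^*\}$. For an operator system $\mathcal S\subseteq B(H)$, a boundary representation is an irreducible unital $*$-representation $\rho$ of $C^*(\mathcal S)$ such that $\rho$ is the only unital completely positive extension of $\rho|_{\mathcal S}$ to $C^*(\mathcal S)$; the Šilov ideal $\mathfrak S_{\mathcal S}$ is the intersection of the kernels of all boundary representations, and the C$^*$-envelope is $C^*_e(\mathcal S)=C^*(\mathcal S)/\mathfrak S_{\mathcal S}$ (equivalently, the C$^*$-algebra $C^*_e(\mathcal S)$ with a unital complete isometry $\iota:\mathcal S\to C^*_e(\mathcal S)$ generating it, such that for every unital complete isometry $\phi$ of $\mathcal S$ into a C$^*$-algebra there is a $*$-epimorphism $\pi:C^*(\phi(\mathcal S))\to C^*_e(\mathcal S)$ with $\pi\circ\phi=\iota$; unique up to $*$-isomorphism). *)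

theory Defs
  imports "Jordan_Normal_Form.Schur_Decomposition"
begin

definition T_lam :: "complex \<Rightarrow> complex mat" where
  "T_lam l = mat_of_rows_list 3 [[0,1,0],[0,0,0],[0,0,l]]"

definition opsys :: "nat \<Rightarrow> complex mat \<Rightarrow> complex mat set" where
  "opsys n T = {a \<cdot>\<^sub>m 1\<^sub>m n + b \<cdot>\<^sub>m T + c \<cdot>\<^sub>m mat_adjoint T | a b c. True}"

(* C^*(S): the C^*-subalgebra of M_n(C) generated by S (and the unit).
   In finite dimensions this is the unital *-subalgebra generated by S. *)
inductive_set cstar_gen :: "nat \<Rightarrow> complex mat set \<Rightarrow> complex mat set"
  for n :: nat and S :: "complex mat set" where
  gen: "x \<in> S \<Longrightarrow> x \<in> cstar_gen n S"
| one: "1\<^sub>m n \<in> cstar_gen n S"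
| add: "x \<in> cstar_gen n S \<Longrightarrow> y \<in> cstar_gen n S \<Longrightarrow> x + y \<in> cstar_gen n S"
| smult: "x \<in> cstar_gen n S \<Longrightarrow> c \<cdot>\<^sub>m x \<in> cstar_gen n S"
| mult: "x \<in> cstar_gen n S \<Longrightarrow> y \<in> cstar_gen n S \<Longrightarrow> x * y \<in> cstar_gen n S"
| adj: "x \<in> cstar_gen n S \<Longrightarrow> mat_adjoint x \<in> cstar_gen n S"

definition psd :: "nat \<Rightarrow> complex mat \<Rightarrow> bool" where
  "psd d M \<longleftrightarrow> M \<in> carrier_mat d d \<and>
     (\<forall>v \<in> carrier_vec d. let q = (\<Sum>i<d. cnj (v $ i) * (M *\<^sub>v v) $ i) in
        Im q = 0 \<and> Re q \<ge> 0)"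

definition blockmat :: "nat \<Rightarrow> nat \<Rightarrow> (nat \<Rightarrow> nat \<Rightarrow> complex mat) \<Rightarrow> complex mat" where
  "blockmat m n a = mat (m * n) (m * n)
     (\<lambda>(r, c). a (r div n) (c div n) $$ (r mod n, c mod n))"

definition lin_on :: "complex mat set \<Rightarrow> (complex mat \<Rightarrow> complex mat) \<Rightarrow> bool" where
  "lin_on A f \<longleftrightarrow> (\<forall>x\<in>A. \<forall>y\<in>A. f (x + y) = f x + f y) \<and>
                   (\<forall>x\<in>A. \<forall>c. f (c \<cdot>\<^sub>m x) = c \<cdot>\<^sub>m f x)"

definition ucp :: "nat \<Rightarrow> complex mat set \<Rightarrow> nat \<Rightarrow> (complex mat \<Rightarrow> complex mat) \<Rightarrow> bool" where
  "ucp n A k \<phi> \<longleftrightarrow> (\<forall>x\<in>A. \<phi> x \<in> carrier_mat k k) \<and> lin_on A \<phi> \<and> \<phi> (1\<^sub>m n) = 1\<^sub>m k \<and>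
     (\<forall>m a. (\<forall>i<m. \<forall>j<m. a i j \<in> A) \<longrightarrow> psd (m * n) (blockmat m n a) \<longrightarrow>
            psd (m * k) (blockmat m k (\<lambda>i j. \<phi> (a i j))))"

definition star_rep :: "nat \<Rightarrow> complex mat set \<Rightarrow> nat \<Rightarrow> (complex mat \<Rightarrow> complex mat) \<Rightarrow> bool" where
  "star_rep n A k \<rho> \<longleftrightarrow> (\<forall>x\<in>A. \<rho> x \<in> carrier_mat k k) \<and> lin_on A \<rho> \<and>
     (\<forall>x\<in>A. \<forall>y\<in>A. \<rho> (x * y) = \<rho> x * \<rho> y) \<and>
     (\<forall>x\<in>A. \<rho> (mat_adjoint x) = mat_adjoint (\<rho> x)) \<and> \<rho> (1\<^sub>m n) = 1\<^sub>m k"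

definition irreducible_rep :: "nat \<Rightarrow> complex mat set \<Rightarrow> nat \<Rightarrow> (complex mat \<Rightarrow> complex mat) \<Rightarrow> bool" where
  "irreducible_rep n A k \<rho> \<longleftrightarrow> star_rep n A k \<rho> \<and> 0 < k \<and>
     (\<forall>P \<in> carrier_mat k k. P * P = P \<and> mat_adjoint P = P \<and>
        (\<forall>x\<in>A. P * \<rho> x = \<rho> x * P) \<longrightarrow> P = 0\<^sub>m k k \<or> P = 1\<^sub>m k)"

definition boundary_rep :: "nat \<Rightarrow> complex mat set \<Rightarrow> nat \<Rightarrow> (complex mat \<Rightarrow> complex mat) \<Rightarrow> bool" where
  "boundary_rep n S k \<rho> \<longleftrightarrow> irreducible_rep n (cstar_gen n S) k \<rho> \<and>
     (\<forall>\<phi>. ucp n (cstar_gen n S) k \<phi> \<and> (\<forall>x\<in>S. \<phi> x = \<rho> x) \<longrightarrow>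
        (\<forall>x\<in>cstar_gen n S. \<phi> x = \<rho> x))"

definition silov_ideal :: "nat \<Rightarrow> complex mat set \<Rightarrow> complex mat set" where
  "silov_ideal n S = {x \<in> cstar_gen n S. \<forall>k \<rho>. boundary_rep n S k \<rho> \<longrightarrow> \<rho> x = 0\<^sub>m k k}"

definition star_hom_onto :: "complex mat set \<Rightarrow> complex mat set \<Rightarrow> (complex mat \<Rightarrow> complex mat) \<Rightarrow> bool" where
  "star_hom_onto A B \<pi> \<longleftrightarrow> \<pi> ` A = B \<and> lin_on A \<pi> \<and>
     (\<forall>x\<in>A. \<forall>y\<in>A. \<pi> (x * y) = \<pi> x * \<pi> y) \<and>
     (\<forall>x\<in>A. \<pi> (mat_adjoint x) = mat_adjoint (\<pi> x))"

(* C^*_e(S) = C^*(S) / Silov ideal is *-isomorphic to B  iff  there is a *-homomorphism of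
   C^*(S) onto B whose kernel is exactly the Silov ideal (first isomorphism theorem) *)
definition cenv_iso :: "nat \<Rightarrow> complex mat set \<Rightarrow> complex mat set \<Rightarrow> nat \<Rightarrow> bool" where
  "cenv_iso n S B k \<longleftrightarrow> (\<exists>\<pi>. star_hom_onto (cstar_gen n S) B \<pi> \<and>
     {x \<in> cstar_gen n S. \<pi> x = 0\<^sub>m k k} = silov_ideal n S)"

(* M_2(C) \<oplus> C realised as block-diagonal matrices diag(A, z) in M_3(C) *)
definition M2_plus_C :: "complex mat set" where
  "M2_plus_C = {A \<in> carrier_mat 3 3. A $$ (0,2) = 0 \<and> A $$ (1,2) = 0 \<and>
                   A $$ (2,0) = 0 \<and> A $$ (2,1) = 0}"

end

theory Submission
  imports Defs
begin

(*
  The C*-algebra generated by S_T is the block-diagonal algebra M2_plus_C, whose irreducible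
  representations are the corner map rho_M2 and the entry map rho_C; the Silov ideal is the
  intersection of the kernels of those among them that are boundary representations.

  For |w| = 1 the positive element (e0 - w e1)(e0 - w e1)^* differs from an element of S_T by
  -(1 - 2 Re (cnj w * l)) E22.  Hence a ucp extension of rho_M2|S_T has a value on E22 whose
  quadratic form vanishes at (1, w) whenever 1 - 2 Re (cnj w * l) > 0; some w in {1, -1} and
  some w in {i, -i} qualify, so E22 is killed, and positivity of the Choi matrix of the matrix
  units then fixes the extension on the corner.  So rho_M2 is always a boundary representation.

  If |l| > 1/2, the same element with w = l / |l| shows that a ucp extension of rho_C|S_T
  satisfies (1 - 2|l|) (1 - phi E22) >= 0, so phi E22 = 1 and rho_C is a boundary
  representation.  If |l| <= 1/2, then l = <T u, u> for a unit vector u in span {e0, e1}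
  (l lies in the numerical range of the 2 x 2 Jordan block), and the vector state at u
  extends the restriction to S_T of any representation sending E22 to 1 without itself
  sending E22 to 1; so every boundary representation kills E22.
*)

lemma less_2_cases: "(i :: nat) < 2 \<longleftrightarrow> i = 0 \<or> i = 1"
  by auto

lemma less_3_cases: "(i :: nat) < 3 \<longleftrightarrow> i = 0 \<or> i = 1 \<or> i = 2"
  by auto

lemma sum_atLeast0_lessThan_2: "(\<Sum>i\<in>{0..<2}. f i) = f 0 + f (1 :: nat)"
  by (simp add: numeral_2_eq_2)

lemma sum_atLeast0_lessThan_3: "(\<Sum>i\<in>{0..<3}. f i) = f 0 + f 1 + f (2 :: nat)"
  by (simp add: numeral_3_eq_3 numeral_2_eq_2)

section \<open>Quadratic forms and positive semidefinite matrices\<close>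

definition qform :: "nat \<Rightarrow> complex mat \<Rightarrow> (nat \<Rightarrow> complex) \<Rightarrow> complex" where
  "qform d M v = (\<Sum>i<d. \<Sum>j<d. cnj (v i) * M $$ (i, j) * v j)"

lemma qform_add:
  assumes "A \<in> carrier_mat d d" "B \<in> carrier_mat d d"
  shows "qform d (A + B) v = qform d A v + qform d B v"
proof -
  have "qform d (A + B) v = (\<Sum>i<d. \<Sum>j<d. cnj (v i) * A $$ (i, j) * v j + cnj (v i) * B $$ (i, j) * v j)"
    unfolding qform_def using assms by (intro sum.cong refl) (auto simp: distrib_left distrib_right)
  then show ?thesis
    unfolding qform_def by (simp add: sum.distrib)
qed

lemma qform_smult:
  assumes "A \<in> carrier_mat d d"
  shows "qform d (c \<cdot>\<^sub>m A) v = c * qform d A v"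
  unfolding qform_def sum_distrib_left using assms by (intro sum.cong refl) (auto simp: mult_ac)

lemma psd_iff_qform:
  "psd d M \<longleftrightarrow> M \<in> carrier_mat d d \<and> (\<forall>v. Im (qform d M v) = 0 \<and> 0 \<le> Re (qform d M v))"
proof -
  have vec_form: "(\<Sum>i<d. cnj (v $ i) * (M *\<^sub>v v) $ i) = qform d M (\<lambda>i. v $ i)"
    if "M \<in> carrier_mat d d" "v \<in> carrier_vec d" for v
    using that by (auto simp: qform_def scalar_prod_def sum_distrib_left lessThan_atLeast0 mult.assoc
        intro!: sum.cong)
  have "qform d M v = qform d M (\<lambda>i. vec d v $ i)" for v
    by (auto simp: qform_def intro!: sum.cong)
  then show ?thesis
    unfolding psd_def Let_def using vec_form by (metis vec_carrier)
qed

lemma psd_qformD: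
  assumes "psd d M"
  shows "Im (qform d M v) = 0" "0 \<le> Re (qform d M v)"
  using assms by (auto simp: psd_iff_qform)

lemma psdI_qform:
  assumes "M \<in> carrier_mat d d" "\<And>v. Im (qform d M v) = 0 \<and> 0 \<le> Re (qform d M v)"
  shows "psd d M"
  using assms by (auto simp: psd_iff_qform)

lemma psd_outer:
  assumes M: "M \<in> carrier_mat d d" and entries: "\<And>i j. i < d \<Longrightarrow> j < d \<Longrightarrow> M $$ (i, j) = u i * cnj (u j)"
  shows "psd d M"
proof (rule psdI_qform[OF M])
  fix v
  define s where "s = (\<Sum>j<d. cnj (u j) * v j)"
  have "qform d M v = cnj s * s"
    unfolding qform_def s_def using entries
    by (simp add: sum_distrib_left sum_distrib_right mult_ac) (rule sum.swap)
  also have "\<dots> = of_real ((cmod s)\<^sup>2)"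
    by (simp add: complex_norm_square mult.commute del: of_real_power)
  finally show "Im (qform d M v) = 0 \<and> 0 \<le> Re (qform d M v)" by simp
qed

lemma sum_mult_indicator:
  fixes i d :: nat
  assumes "i < d"
  shows "(\<Sum>t<d. g t * (if t = i then 1 else 0)) = (g i :: complex)"
proof -
  have "(\<Sum>t<d. g t * (if t = i then 1 else 0)) = (\<Sum>t<d. if t = i then g t else 0)"
    by (intro sum.cong refl) simp
  then show ?thesis
    using assms by (simp add: sum.delta)
qed

lemma psd_diag:
  assumes "psd d M" "i < d"
  shows "Im (M $$ (i, i)) = 0" "0 \<le> Re (M $$ (i, i))"
proof -
  have "qform d M (\<lambda>r. if r = i then 1 else 0) =
        (\<Sum>r<d. (\<Sum>t<d. M $$ (r, t) * (if t = i then 1 else 0)) * (if r = i then 1 else 0))"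
    unfolding qform_def by (intro sum.cong refl) (simp add: sum_distrib_right)
  also have "\<dots> = M $$ (i, i)"
    using assms(2) by (simp add: sum_mult_indicator)
  finally have "qform d M (\<lambda>r. if r = i then 1 else 0) = M $$ (i, i)" .
  then show "Im (M $$ (i, i)) = 0" "0 \<le> Re (M $$ (i, i))"
    using psd_qformD[OF assms(1)] by metis+
qed

definition coord2 :: "nat \<Rightarrow> nat \<Rightarrow> complex \<Rightarrow> complex \<Rightarrow> nat \<Rightarrow> complex" where
  "coord2 i j a b r = (if r = i then a else if r = j then b else 0)"

lemma sum_mult_coord2:
  assumes "i < d" "j < d" "i \<noteq> j"
  shows "(\<Sum>r<d. g r * coord2 i j a b r) = g i * a + g j * b"
proof -
  have "(\<Sum>r<d. g r * coord2 i j a b r) = (\<Sum>r<d. (if r = i then g r * a else 0) + (if r = j then g r * b else 0))"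
    using assms(3) by (intro sum.cong refl) (auto simp: coord2_def)
  then show ?thesis
    using assms(1,2) by (simp add: sum.distrib sum.delta)
qed

lemma qform_coord2:
  assumes "i < d" "j < d" "i \<noteq> j"
  shows "qform d M (coord2 i j a b) =
    cnj a * M $$ (i, i) * a + cnj a * M $$ (i, j) * b + cnj b * M $$ (j, i) * a + cnj b * M $$ (j, j) * b"
proof -
  have "qform d M (coord2 i j a b) =
        (\<Sum>r<d. (M $$ (r, i) * a + M $$ (r, j) * b) * coord2 i j (cnj a) (cnj b) r)"
    (is "_ = ?outer") unfolding qform_def
  proof (intro sum.cong refl)
    fix r
    have "cnj (coord2 i j a b r) = coord2 i j (cnj a) (cnj b) r"
      by (simp add: coord2_def)
    then show "(\<Sum>t<d. cnj (coord2 i j a b r) * M $$ (r, t) * coord2 i j a b t) =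
               (M $$ (r, i) * a + M $$ (r, j) * b) * coord2 i j (cnj a) (cnj b) r"
      using sum_mult_coord2[OF assms, of "\<lambda>t. cnj (coord2 i j a b r) * M $$ (r, t)"]
      by (simp add: algebra_simps)
  qed
  also have "?outer = (M $$ (i, i) * a + M $$ (i, j) * b) * cnj a + (M $$ (j, i) * a + M $$ (j, j) * b) * cnj b"
    by (rule sum_mult_coord2[OF assms])
  finally show ?thesis
    by (simp add: algebra_simps)
qed

lemma psd_coord2:
  fixes a b :: complex
  assumes "psd d M" "i < d" "j < d" "i \<noteq> j"
  defines "q \<equiv> cnj a * M $$ (i, i) * a + cnj a * M $$ (i, j) * b + cnj b * M $$ (j, i) * a + cnj b * M $$ (j, j) * b"
  shows "Im q = 0" "0 \<le> Re q"
  using psd_qformD[OF assms(1), of "coord2 i j a b"] qform_coord2[OF assms(2-4)] unfolding q_def by simp_all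

lemma psd_offdiag_eq_0:
  assumes psd: "psd d M" and ij: "i < d" "j < d" "i \<noteq> j" and zero: "M $$ (j, j) = 0"
  shows "M $$ (i, j) = 0" "M $$ (j, i) = 0"
proof -
  let ?u = "M $$ (i, j) + M $$ (j, i)" and ?w = "M $$ (i, j) - M $$ (j, i)"
  have affine_nonneg_const: "c = 0" if "\<And>t :: real. 0 \<le> a + t * c" for a c :: real
  proof (rule ccontr)
    assume "c \<noteq> 0"
    then have "a + (- (\<bar>a\<bar> + 1) / c) * c < 0" by simp
    then show False using that by (metis not_le)
  qed
  have "0 \<le> Re (M $$ (i, i)) + t * Re ?u" for t :: real
    using psd_coord2(2)[OF psd ij, of 1 "of_real t"] zero by (simp add: algebra_simps)
  then have "Re ?u = 0" by (rule affine_nonneg_const)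
  have "0 \<le> Re (M $$ (i, i)) + t * (- Im ?w)" for t :: real
    using psd_coord2(2)[OF psd ij, of 1 "\<i> * of_real t"] zero by (simp add: algebra_simps)
  then have "Im ?w = 0" using affine_nonneg_const by fastforce
  moreover have "Im (M $$ (i, i)) + Im ?u = 0" "Im (M $$ (i, i)) = 0" "Im (M $$ (i, i)) + Re ?w = 0"
    using psd_coord2(1)[OF psd ij, of 1 1] psd_coord2(1)[OF psd ij, of 1 0] psd_coord2(1)[OF psd ij, of 1 \<i>]
      zero by (simp_all add: algebra_simps)
  ultimately show "M $$ (i, j) = 0" "M $$ (j, i) = 0"
    using \<open>Re ?u = 0\<close> by (simp_all add: complex_eq_iff)
qed

lemma psd_2_eq_0:
  assumes R: "psd 2 R" and a: "a = 1 \<or> a = -1" and b: "b = \<i> \<or> b = -\<i>"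
    and vanish: "qform 2 R (coord2 0 1 1 a) = 0" "qform 2 R (coord2 0 1 1 b) = 0"
  shows "R = 0\<^sub>m 2 2"
proof -
  note f = psd_coord2[OF R, of 0 1, simplified]
  have expand: "qform 2 R (coord2 0 1 1 c) =
      R $$ (0, 0) + R $$ (0, 1) * c + cnj c * R $$ (1, 0) + cnj c * R $$ (1, 1) * c" for c
    by (simp add: qform_coord2)
  have "R $$ (0, 0) = 0 \<and> R $$ (1, 1) = 0 \<and> R $$ (0, 1) = 0 \<and> R $$ (1, 0) = 0"
    using a b f[of 1 0] f[of 0 1] f[of 1 1] f[of 1 \<i>] f[of 1 "a + b"] f[of "cnj (a + b)" 1]
      vanish[unfolded expand]
    by (auto simp: complex_eq_iff algebra_simps)
  moreover have "R \<in> carrier_mat 2 2"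
    using R by (simp add: psd_def)
  ultimately show ?thesis
    by (auto intro!: eq_matI simp: less_2_cases)
qed

section \<open>Completely positive maps\<close>

lemma sum_lessThan_mult_nat:
  fixes g :: "nat \<Rightarrow> 'a::comm_monoid_add"
  shows "(\<Sum>p<m * n. g p) = (\<Sum>i<m. \<Sum>r<n. g (i * n + r))"
proof -
  have "(\<Sum>p<m * n. g p) = (\<Sum>i<m. sum g {i * n..<i * n + n})"
    using sum.nat_group[of g n m] by simp
  also have "\<dots> = (\<Sum>i<m. \<Sum>r<n. g (i * n + r))"
  proof (rule sum.cong[OF refl])
    fix i
    have "sum g {0 + i * n..<n + i * n} = (\<Sum>r\<in>{0..<n}. g (r + i * n))"
      by (rule sum.shift_bounds_nat_ivl)
    then show "sum g {i * n..<i * n + n} = (\<Sum>r<n. g (i * n + r))"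
      by (simp add: add.commute lessThan_atLeast0)
  qed
  finally show ?thesis .
qed

lemma qform_blockmat:
  "qform (m * n) (blockmat m n a) v =
     (\<Sum>i<m. \<Sum>j<m. \<Sum>r<n. \<Sum>t<n. cnj (v (i * n + r)) * a i j $$ (r, t) * v (j * n + t))"
proof -
  have idx: "i * n + r < m * n" if "i < m" "r < n" for i r
  proof -
    have "i * n + r < i * n + n" using that by simp
    also have "\<dots> \<le> m * n" using that by (metis add.commute mult_Suc less_eq_Suc_le mult_le_mono1)
    finally show ?thesis .
  qed
  have "qform (m * n) (blockmat m n a) v =
     (\<Sum>i<m. \<Sum>r<n. \<Sum>j<m. \<Sum>t<n. cnj (v (i * n + r)) * a i j $$ (r, t) * v (j * n + t))"
    unfolding qform_def sum_lessThan_mult_nat[of _ m n]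
    by (intro sum.cong refl) (simp add: blockmat_def idx)
  also have "\<dots> = (\<Sum>i<m. \<Sum>j<m. \<Sum>r<n. \<Sum>t<n. cnj (v (i * n + r)) * a i j $$ (r, t) * v (j * n + t))"
    by (intro sum.cong refl sum.swap)
  finally show ?thesis .
qed

lemma psd_blockmat_compress:
  assumes "psd (m * n) (blockmat m n a)"
  shows "psd m (mat m m (\<lambda>(i, j). qform n (a i j) u))"
proof (rule psdI_qform)
  fix z
  have "qform m (mat m m (\<lambda>(i, j). qform n (a i j) u)) z =
        qform (m * n) (blockmat m n a) (\<lambda>p. z (p div n) * u (p mod n))"
    unfolding qform_blockmat by (simp add: qform_def sum_distrib_left sum_distrib_right mult_ac)
  then show "Im (qform m (mat m m (\<lambda>(i, j). qform n (a i j) u)) z) = 0 \<and>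
             0 \<le> Re (qform m (mat m m (\<lambda>(i, j). qform n (a i j) u)) z)"
    using psd_qformD[OF assms] by simp
qed simp

lemma psd_blockmat_scalar:
  assumes "psd m C"
  shows "psd (m * k) (blockmat m k (\<lambda>i j. C $$ (i, j) \<cdot>\<^sub>m 1\<^sub>m k))"
proof (rule psdI_qform)
  fix w
  have diag: "(\<Sum>t<k. cnj (w (i * k + r)) * (C $$ (i, j) \<cdot>\<^sub>m 1\<^sub>m k) $$ (r, t) * w (j * k + t)) =
              cnj (w (i * k + r)) * C $$ (i, j) * w (j * k + r)" if "r < k" for i j r
  proof -
    have "(\<Sum>t<k. cnj (w (i * k + r)) * (C $$ (i, j) \<cdot>\<^sub>m 1\<^sub>m k) $$ (r, t) * w (j * k + t)) =
          (\<Sum>t<k. if r = t then cnj (w (i * k + r)) * C $$ (i, j) * w (j * k + t) else 0)"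
      by (intro sum.cong refl) (use that in auto)
    also have "\<dots> = cnj (w (i * k + r)) * C $$ (i, j) * w (j * k + r)"
      using that by (simp add: sum.delta)
    finally show ?thesis .
  qed
  have "qform (m * k) (blockmat m k (\<lambda>i j. C $$ (i, j) \<cdot>\<^sub>m 1\<^sub>m k)) w =
        (\<Sum>i<m. \<Sum>j<m. \<Sum>r<k. cnj (w (i * k + r)) * C $$ (i, j) * w (j * k + r))"
    unfolding qform_blockmat by (intro sum.cong refl diag) simp
  also have "\<dots> = (\<Sum>r<k. qform m C (\<lambda>i. w (i * k + r)))"
    unfolding qform_def by (simp add: sum.swap[of _ "{..<k}"])
  finally have "qform (m * k) (blockmat m k (\<lambda>i j. C $$ (i, j) \<cdot>\<^sub>m 1\<^sub>m k)) w =
                (\<Sum>r<k. qform m C (\<lambda>i. w (i * k + r)))" .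
  then show "Im (qform (m * k) (blockmat m k (\<lambda>i j. C $$ (i, j) \<cdot>\<^sub>m 1\<^sub>m k)) w) = 0 \<and>
             0 \<le> Re (qform (m * k) (blockmat m k (\<lambda>i j. C $$ (i, j) \<cdot>\<^sub>m 1\<^sub>m k)) w)"
    using psd_qformD[OF assms] by (simp add: Im_sum Re_sum sum_nonneg)
qed (simp add: blockmat_def)

lemma blockmat_cong:
  assumes "\<And>i j. i < m \<Longrightarrow> j < m \<Longrightarrow> a i j = b i j"
  shows "blockmat m n a = blockmat m n b"
proof -
  have "r div n < m" if "r < m * n" for r
    using that by (simp add: less_mult_imp_div_less)
  then show ?thesis
    unfolding blockmat_def using assms by (intro eq_matI) auto
qed

lemma ucp_psd:
  assumes ucp: "ucp n A k \<phi>" and x: "x \<in> A" "psd n x"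
  shows "psd k (\<phi> x)"
proof -
  have blockmat_1: "blockmat 1 d (\<lambda>_ _. y) = y" if "y \<in> carrier_mat d d" for y :: "complex mat" and d
    using that unfolding blockmat_def by (intro eq_matI) auto
  have cp: "\<And>m a. (\<forall>i<m. \<forall>j<m. a i j \<in> A) \<Longrightarrow> psd (m * n) (blockmat m n a) \<Longrightarrow>
              psd (m * k) (blockmat m k (\<lambda>i j. \<phi> (a i j)))"
    using ucp unfolding ucp_def by blast
  have "x \<in> carrier_mat n n" "\<phi> x \<in> carrier_mat k k"
    using ucp x by (auto simp: psd_def ucp_def)
  then show ?thesis
    using cp[of 1 "\<lambda>_ _. x"] x blockmat_1[of x n] blockmat_1[of "\<phi> x" k] by simp
qed

lemma ucp_vector_state:
  assumes A: "A \<subseteq> carrier_mat n n" and unital: "qform n (1\<^sub>m n) u = 1"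
  shows "ucp n A k (\<lambda>x. qform n x u \<cdot>\<^sub>m 1\<^sub>m k)"
  unfolding ucp_def lin_on_def
proof (intro conjI ballI allI impI)
  fix x y assume "x \<in> A" "y \<in> A"
  with A have "x \<in> carrier_mat n n" "y \<in> carrier_mat n n" by auto
  then show "qform n (x + y) u \<cdot>\<^sub>m 1\<^sub>m k = qform n x u \<cdot>\<^sub>m 1\<^sub>m k + qform n y u \<cdot>\<^sub>m 1\<^sub>m k"
    by (auto intro!: eq_matI simp: qform_add algebra_simps)
next
  fix x c assume "x \<in> A"
  with A have "x \<in> carrier_mat n n" by auto
  then show "qform n (c \<cdot>\<^sub>m x) u \<cdot>\<^sub>m 1\<^sub>m k = c \<cdot>\<^sub>m (qform n x u \<cdot>\<^sub>m 1\<^sub>m k)"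
    by (auto intro!: eq_matI simp: qform_smult)
next
  fix m a assume "psd (m * n) (blockmat m n a)"
  then have "psd (m * k) (blockmat m k (\<lambda>i j. mat m m (\<lambda>(i, j). qform n (a i j) u) $$ (i, j) \<cdot>\<^sub>m 1\<^sub>m k))"
    by (intro psd_blockmat_scalar psd_blockmat_compress)
  moreover have "blockmat m k (\<lambda>i j. mat m m (\<lambda>(i, j). qform n (a i j) u) $$ (i, j) \<cdot>\<^sub>m 1\<^sub>m k) =
                 blockmat m k (\<lambda>i j. qform n (a i j) u \<cdot>\<^sub>m 1\<^sub>m k)"
    by (rule blockmat_cong) simp
  ultimately show "psd (m * k) (blockmat m k (\<lambda>i j. qform n (a i j) u \<cdot>\<^sub>m 1\<^sub>m k))"
    by simp
qed (use unital in \<open>auto intro!: eq_matI\<close>)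

section \<open>Representations\<close>

lemma star_rep_zero:
  assumes rep: "star_rep n A k \<rho>" and one: "1\<^sub>m n \<in> A"
  shows "\<rho> (0\<^sub>m n n) = 0\<^sub>m k k"
proof -
  have "\<rho> (0 \<cdot>\<^sub>m 1\<^sub>m n) = 0 \<cdot>\<^sub>m \<rho> (1\<^sub>m n)" "\<rho> (1\<^sub>m n) = 1\<^sub>m k"
    using rep one unfolding star_rep_def lin_on_def by blast+
  moreover have "0 \<cdot>\<^sub>m 1\<^sub>m n = (0\<^sub>m n n :: complex mat)" "0 \<cdot>\<^sub>m 1\<^sub>m k = (0\<^sub>m k k :: complex mat)"
    by (auto intro!: eq_matI)
  ultimately show ?thesis
    by simp
qed

lemma idempotent_mat_1_cases:
  assumes "P \<in> carrier_mat 1 1" "P * P = P"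
  shows "P = 0\<^sub>m 1 1 \<or> P = (1\<^sub>m 1 :: complex mat)"
proof -
  have "P $$ (0, 0) * P $$ (0, 0) = P $$ (0, 0)"
    using arg_cong[OF assms(2), of "\<lambda>M. M $$ (0, 0)"] assms(1) by (simp add: scalar_prod_def)
  then have "P $$ (0, 0) = 0 \<or> P $$ (0, 0) = 1"
    by (metis mult_cancel_right1 mult_zero_right)
  then show ?thesis
    using assms(1) by (auto intro!: eq_matI)
qed

lemma irreducible_rep_central_projection:
  assumes "irreducible_rep n A k \<rho>" and p: "p \<in> A" "p * p = p" "mat_adjoint p = p"
    and central: "\<And>x. x \<in> A \<Longrightarrow> p * x = x * p"
  shows "\<rho> p = 0\<^sub>m k k \<or> \<rho> p = 1\<^sub>m k"
proof -
  have rep: "star_rep n A k \<rho>"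
    and irr: "\<And>P. P \<in> carrier_mat k k \<Longrightarrow> P * P = P \<and> mat_adjoint P = P \<and>
                 (\<forall>x\<in>A. P * \<rho> x = \<rho> x * P) \<Longrightarrow> P = 0\<^sub>m k k \<or> P = 1\<^sub>m k"
    using assms(1) unfolding irreducible_rep_def by blast+
  have car: "\<rho> p \<in> carrier_mat k k"
    and mult: "\<And>x y. x \<in> A \<Longrightarrow> y \<in> A \<Longrightarrow> \<rho> (x * y) = \<rho> x * \<rho> y"
    and adj: "\<rho> (mat_adjoint p) = mat_adjoint (\<rho> p)"
    using rep p(1) unfolding star_rep_def by blast+
  have "\<rho> p * \<rho> x = \<rho> x * \<rho> p" if "x \<in> A" for x
    using mult[OF p(1) that] mult[OF that p(1)] central[OF that] by simp
  moreover have "\<rho> p * \<rho> p = \<rho> p" "mat_adjoint (\<rho> p) = \<rho> p"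
    using mult[OF p(1) p(1)] adj p by simp_all
  ultimately show ?thesis
    using irr[OF car] by blast
qed

section \<open>The C*-algebra generated by S_T\<close>

lemma mat_adjoint_eq_mat:
  "mat_adjoint (A :: complex mat) = mat (dim_col A) (dim_row A) (\<lambda>(i, j). cnj (A $$ (j, i)))"
  unfolding mat_adjoint_def by (rule eq_matI) (auto simp: mat_of_rows_def)

lemma opsys_memI: "a \<cdot>\<^sub>m 1\<^sub>m n + b \<cdot>\<^sub>m T + c \<cdot>\<^sub>m mat_adjoint T \<in> opsys n T"
  unfolding opsys_def by blast

lemma mem_opsys:
  assumes "T \<in> carrier_mat n n" shows "T \<in> opsys n T"
proof -
  have "0 \<cdot>\<^sub>m 1\<^sub>m n + 1 \<cdot>\<^sub>m T + 0 \<cdot>\<^sub>m mat_adjoint T = T"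
    using assms by (intro eq_matI) (auto simp: mat_adjoint_eq_mat)
  then show ?thesis using opsys_memI by metis
qed

lemma adjoint_mem_opsys:
  assumes "T \<in> carrier_mat n n" shows "mat_adjoint T \<in> opsys n T"
proof -
  have "0 \<cdot>\<^sub>m 1\<^sub>m n + 0 \<cdot>\<^sub>m T + 1 \<cdot>\<^sub>m mat_adjoint T = mat_adjoint T"
    using assms by (intro eq_matI) (auto simp: mat_adjoint_eq_mat)
  then show ?thesis using opsys_memI by metis
qed

definition E :: "nat \<Rightarrow> nat \<Rightarrow> complex mat" where
  "E i j = mat 3 3 (\<lambda>(r, s). if r = i \<and> s = j then 1 else 0)"

lemma E_carrier [simp]: "E i j \<in> carrier_mat 3 3"
  by (simp add: E_def)

lemma E_mult_E: "j < 3 \<Longrightarrow> E i j * E j k = E i k"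
  by (intro eq_matI) (auto simp: E_def less_3_cases scalar_prod_def sum_atLeast0_lessThan_3)

lemma mat_adjoint_E: "mat_adjoint (E i j) = E j i"
  by (intro eq_matI) (auto simp: E_def mat_adjoint_eq_mat)

lemma one_mat_3_eq_E: "1\<^sub>m 3 = E 0 0 + E 1 1 + E 2 2"
  by (intro eq_matI) (auto simp: E_def less_3_cases)

lemma T_lam_eq_E: "T_lam l = E 0 1 + l \<cdot>\<^sub>m E 2 2"
  unfolding T_lam_def mat_of_rows_list_def by (intro eq_matI) (auto simp: E_def less_3_cases)

lemma T_lam_carrier [simp]: "T_lam l \<in> carrier_mat 3 3"
  by (simp add: T_lam_eq_E)

lemma mat_adjoint_T_lam_eq_E: "mat_adjoint (T_lam l) = E 1 0 + cnj l \<cdot>\<^sub>m E 2 2"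
  by (intro eq_matI) (auto simp: T_lam_eq_E mat_adjoint_eq_mat E_def)

lemma M2_plus_C_eq_E:
  "x \<in> M2_plus_C \<Longrightarrow> x = x $$ (0, 0) \<cdot>\<^sub>m E 0 0 + x $$ (0, 1) \<cdot>\<^sub>m E 0 1 + x $$ (1, 0) \<cdot>\<^sub>m E 1 0
     + x $$ (1, 1) \<cdot>\<^sub>m E 1 1 + x $$ (2, 2) \<cdot>\<^sub>m E 2 2"
  unfolding M2_plus_C_def by (intro eq_matI) (auto simp: E_def less_3_cases)

abbreviation opsys_T :: "complex \<Rightarrow> complex mat set" where
  "opsys_T l \<equiv> opsys 3 (T_lam l)"

abbreviation cstar_T :: "complex \<Rightarrow> complex mat set" where
  "cstar_T l \<equiv> cstar_gen 3 (opsys_T l)"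

lemma T_lam_mem_cstar_T: "T_lam l \<in> cstar_T l"
  by (intro cstar_gen.gen mem_opsys T_lam_carrier)

lemma E22_mem_cstar_T: "E 2 2 \<in> cstar_T l"
proof (cases "l = 0")
  case True
  have "1\<^sub>m 3 + (-1) \<cdot>\<^sub>m (T_lam l * mat_adjoint (T_lam l)) + (-1) \<cdot>\<^sub>m (mat_adjoint (T_lam l) * T_lam l)
        \<in> cstar_T l"
    by (intro cstar_gen.intros T_lam_mem_cstar_T)
  moreover have "1\<^sub>m 3 + (-1) \<cdot>\<^sub>m (T_lam 0 * mat_adjoint (T_lam 0)) + (-1) \<cdot>\<^sub>m (mat_adjoint (T_lam 0) * T_lam 0)
        = E 2 2"
    by (intro eq_matI)
      (auto simp: T_lam_eq_E mat_adjoint_eq_mat E_def less_3_cases scalar_prod_def sum_atLeast0_lessThan_3)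
  ultimately show ?thesis using True by simp
next
  case False
  have "(1 / (l * l)) \<cdot>\<^sub>m (T_lam l * T_lam l) \<in> cstar_T l"
    by (intro cstar_gen.intros T_lam_mem_cstar_T)
  moreover have "(1 / (l * l)) \<cdot>\<^sub>m (T_lam l * T_lam l) = E 2 2"
    using False
    by (intro eq_matI) (auto simp: T_lam_eq_E E_def less_3_cases scalar_prod_def sum_atLeast0_lessThan_3)
  ultimately show ?thesis by simp
qed

lemma E01_mem_cstar_T: "E 0 1 \<in> cstar_T l"
proof -
  have "T_lam l + (- l) \<cdot>\<^sub>m E 2 2 \<in> cstar_T l"
    by (intro cstar_gen.intros T_lam_mem_cstar_T E22_mem_cstar_T)
  moreover have "T_lam l + (- l) \<cdot>\<^sub>m E 2 2 = E 0 1"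
    by (intro eq_matI) (auto simp: T_lam_eq_E E_def)
  ultimately show ?thesis by simp
qed

lemma E10_mem_cstar_T: "E 1 0 \<in> cstar_T l"
  using cstar_gen.adj[OF E01_mem_cstar_T] by (simp add: mat_adjoint_E)

lemma E00_mem_cstar_T: "E 0 0 \<in> cstar_T l"
  using cstar_gen.mult[OF E01_mem_cstar_T E10_mem_cstar_T] by (simp add: E_mult_E)

lemma E11_mem_cstar_T: "E 1 1 \<in> cstar_T l"
  using cstar_gen.mult[OF E10_mem_cstar_T E01_mem_cstar_T] by (simp add: E_mult_E)

lemmas E_mem_cstar_T =
  E00_mem_cstar_T E01_mem_cstar_T E10_mem_cstar_T E11_mem_cstar_T E22_mem_cstar_T

lemma cstar_T_eq_M2_plus_C: "cstar_T l = M2_plus_C"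
proof
  show "cstar_T l \<subseteq> M2_plus_C"
  proof
    fix x assume "x \<in> cstar_T l"
    then show "x \<in> M2_plus_C"
    proof (induction rule: cstar_gen.induct)
      case (gen x)
      then show ?case
        by (auto simp: opsys_def M2_plus_C_def T_lam_eq_E mat_adjoint_eq_mat E_def)
    qed (auto simp: M2_plus_C_def mat_adjoint_eq_mat scalar_prod_def sum_atLeast0_lessThan_3)
  qed
  show "M2_plus_C \<subseteq> cstar_T l"
  proof
    fix x assume "x \<in> M2_plus_C"
    moreover have "x $$ (0, 0) \<cdot>\<^sub>m E 0 0 + x $$ (0, 1) \<cdot>\<^sub>m E 0 1 + x $$ (1, 0) \<cdot>\<^sub>m E 1 0
        + x $$ (1, 1) \<cdot>\<^sub>m E 1 1 + x $$ (2, 2) \<cdot>\<^sub>m E 2 2 \<in> cstar_T l"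
      by (intro cstar_gen.add cstar_gen.smult E_mem_cstar_T)
    ultimately show "x \<in> cstar_T l"
      using M2_plus_C_eq_E by metis
  qed
qed

definition rho_M2 :: "complex mat \<Rightarrow> complex mat" where
  "rho_M2 x = mat 2 2 (\<lambda>(i, j). x $$ (i, j))"

definition rho_C :: "complex mat \<Rightarrow> complex mat" where
  "rho_C x = mat 1 1 (\<lambda>_. x $$ (2, 2))"

lemma rho_M2_carrier [simp]: "rho_M2 x \<in> carrier_mat 2 2"
  by (simp add: rho_M2_def)

lemma rho_M2_E: "rho_M2 (E i j) = mat 2 2 (\<lambda>(r, s). if r = i \<and> s = j then 1 else 0)"
  by (intro eq_matI) (auto simp: rho_M2_def E_def)

lemma rho_M2_onto: "rho_M2 ` cstar_T l = carrier_mat 2 2"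
proof
  show "carrier_mat 2 2 \<subseteq> rho_M2 ` cstar_T l"
  proof
    fix M :: "complex mat" assume M: "M \<in> carrier_mat 2 2"
    let ?x = "M $$ (0, 0) \<cdot>\<^sub>m E 0 0 + M $$ (0, 1) \<cdot>\<^sub>m E 0 1 + M $$ (1, 0) \<cdot>\<^sub>m E 1 0 + M $$ (1, 1) \<cdot>\<^sub>m E 1 1"
    have "?x \<in> cstar_T l"
      by (intro cstar_gen.add cstar_gen.smult E_mem_cstar_T)
    moreover have "rho_M2 ?x = M"
      using M by (intro eq_matI) (auto simp: rho_M2_def E_def less_2_cases)
    ultimately show "M \<in> rho_M2 ` cstar_T l"
      by (metis image_eqI)
  qed
qed auto

lemma star_rep_rho_M2: "star_rep 3 (cstar_T l) 2 rho_M2"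
  unfolding star_rep_def lin_on_def cstar_T_eq_M2_plus_C
  by (auto simp: rho_M2_def M2_plus_C_def scalar_prod_def sum_atLeast0_lessThan_3
      sum_atLeast0_lessThan_2 mat_adjoint_eq_mat less_2_cases intro!: eq_matI)

lemma star_rep_rho_C: "star_rep 3 (cstar_T l) 1 rho_C"
  unfolding star_rep_def lin_on_def cstar_T_eq_M2_plus_C
  by (auto simp: rho_C_def M2_plus_C_def scalar_prod_def sum_atLeast0_lessThan_3
      mat_adjoint_eq_mat intro!: eq_matI)

lemma irreducible_rep_rho_M2: "irreducible_rep 3 (cstar_T l) 2 rho_M2"
  unfolding irreducible_rep_def
proof (intro conjI star_rep_rho_M2 ballI impI)
  fix P :: "complex mat"
  assume P: "P \<in> carrier_mat 2 2" and proj: "P * P = P \<and> mat_adjoint P = P \<and>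
    (\<forall>x\<in>cstar_T l. P * rho_M2 x = rho_M2 x * P)"
  then have idem: "P * P = P"
    by blast
  have comm: "P * rho_M2 (E i j) = rho_M2 (E i j) * P" if "(i, j) \<in> {(0, 0), (0, 1)}" for i j
    using that proj E_mem_cstar_T by auto
  have entries: "P $$ (0, 1) = 0" "P $$ (1, 0) = 0" "P $$ (0, 0) = P $$ (1, 1)"
    using arg_cong[OF comm[of 0 0], of "\<lambda>M. M $$ (0, 1)"] arg_cong[OF comm[of 0 0], of "\<lambda>M. M $$ (1, 0)"]
      arg_cong[OF comm[of 0 1], of "\<lambda>M. M $$ (0, 1)"] P
    by (simp_all add: rho_M2_def E_def scalar_prod_def sum_atLeast0_lessThan_2)
  have "P $$ (0, 0) * P $$ (0, 0) = P $$ (0, 0)"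
    using arg_cong[OF idem, of "\<lambda>M. M $$ (0, 0)"] P entries by (simp add: scalar_prod_def sum_atLeast0_lessThan_2)
  then have "P $$ (0, 0) = 0 \<or> P $$ (0, 0) = 1"
    by (metis mult_cancel_right1 mult_zero_right)
  then show "P = 0\<^sub>m 2 2 \<or> P = 1\<^sub>m 2"
    using P entries by (auto intro!: eq_matI simp: less_2_cases)
qed simp

lemma irreducible_rep_rho_C: "irreducible_rep 3 (cstar_T l) 1 rho_C"
  unfolding irreducible_rep_def
  using star_rep_rho_C idempotent_mat_1_cases by (intro conjI ballI impI) simp_all

section \<open>Boundary representations\<close>

text \<open>\<open>(e\<^sub>0 - w e\<^sub>1) (e\<^sub>0 - w e\<^sub>1)\<^sup>*\<close>, positive semidefinite when \<open>|w| = 1\<close>.\<close>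

definition pos_elem :: "complex \<Rightarrow> complex mat" where
  "pos_elem w = E 0 0 + E 1 1 + (- cnj w) \<cdot>\<^sub>m E 0 1 + (- w) \<cdot>\<^sub>m E 1 0"

lemma pos_elem_mem_cstar_T: "pos_elem w \<in> cstar_T l"
  unfolding pos_elem_def by (intro cstar_gen.add cstar_gen.smult E_mem_cstar_T)

lemma pos_elem_psd: "w * cnj w = 1 \<Longrightarrow> psd 3 (pos_elem w)"
  by (rule psd_outer[where u = "coord2 0 1 1 (- w)"]) (auto simp: pos_elem_def E_def coord2_def less_3_cases)

lemma pos_elem_eq_opsys_E22:
  "pos_elem w = (1 \<cdot>\<^sub>m 1\<^sub>m 3 + (- cnj w) \<cdot>\<^sub>m T_lam l + (- w) \<cdot>\<^sub>m mat_adjoint (T_lam l))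
     + (- of_real (1 - 2 * Re (cnj w * l))) \<cdot>\<^sub>m E 2 2"
  by (intro eq_matI)
    (auto simp: pos_elem_def T_lam_eq_E mat_adjoint_eq_mat E_def less_3_cases complex_eq_iff)

lemma E_diag_psd: "i < 3 \<Longrightarrow> psd 3 (E i i)"
  by (rule psd_outer[where u = "\<lambda>r. if r = i then 1 else 0"]) (auto simp: E_def)

lemma E_blockmat_psd: "psd (2 * 3) (blockmat 2 3 E)"
  by (rule psd_outer[where u = "\<lambda>r. if r mod 3 = r div 3 then 1 else 0"]) (auto simp: blockmat_def E_def)

locale ucp_cstar_T =
  fixes l :: complex and k :: nat and \<phi> :: "complex mat \<Rightarrow> complex mat"
  assumes ucp: "ucp 3 (cstar_T l) k \<phi>"
begin

lemma carrier: "x \<in> cstar_T l \<Longrightarrow> \<phi> x \<in> carrier_mat k k"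
  using ucp unfolding ucp_def by blast

lemma add: "x \<in> cstar_T l \<Longrightarrow> y \<in> cstar_T l \<Longrightarrow> \<phi> (x + y) = \<phi> x + \<phi> y"
  using ucp unfolding ucp_def lin_on_def by blast

lemma smult: "x \<in> cstar_T l \<Longrightarrow> \<phi> (c \<cdot>\<^sub>m x) = c \<cdot>\<^sub>m \<phi> x"
  using ucp unfolding ucp_def lin_on_def by blast

lemma unital: "\<phi> (1\<^sub>m 3) = 1\<^sub>m k"
  using ucp unfolding ucp_def by blast

lemma psd: "x \<in> cstar_T l \<Longrightarrow> psd 3 x \<Longrightarrow> psd k (\<phi> x)"
  by (rule ucp_psd[OF ucp])

lemma cp: "(\<And>i j. i < m \<Longrightarrow> j < m \<Longrightarrow> a i j \<in> cstar_T l) \<Longrightarrow> psd (m * 3) (blockmat m 3 a) \<Longrightarrow>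
    psd (m * k) (blockmat m k (\<lambda>i j. \<phi> (a i j)))"
  using ucp unfolding ucp_def by blast

lemma carrier_E: "\<phi> (E i j) \<in> carrier_mat k k" if "(i, j) \<in> {(0, 0), (0, 1), (1, 0), (1, 1), (2, 2)}"
  using that carrier E_mem_cstar_T by auto

lemma expand:
  assumes "x \<in> cstar_T l"
  shows "\<phi> x = x $$ (0, 0) \<cdot>\<^sub>m \<phi> (E 0 0) + x $$ (0, 1) \<cdot>\<^sub>m \<phi> (E 0 1) + x $$ (1, 0) \<cdot>\<^sub>m \<phi> (E 1 0)
     + x $$ (1, 1) \<cdot>\<^sub>m \<phi> (E 1 1) + x $$ (2, 2) \<cdot>\<^sub>m \<phi> (E 2 2)"
proof -
  have "x \<in> M2_plus_C" using assms cstar_T_eq_M2_plus_C by blast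
  then have "\<phi> x = \<phi> (x $$ (0, 0) \<cdot>\<^sub>m E 0 0 + x $$ (0, 1) \<cdot>\<^sub>m E 0 1 + x $$ (1, 0) \<cdot>\<^sub>m E 1 0
     + x $$ (1, 1) \<cdot>\<^sub>m E 1 1 + x $$ (2, 2) \<cdot>\<^sub>m E 2 2)"
    using M2_plus_C_eq_E by metis
  then show ?thesis
    by (simp only: add smult cstar_gen.add cstar_gen.smult E_mem_cstar_T)
qed

lemma unital_E: "\<phi> (E 0 0) + \<phi> (E 1 1) + \<phi> (E 2 2) = 1\<^sub>m k"
  using unital unfolding one_mat_3_eq_E by (simp only: add cstar_gen.add E_mem_cstar_T)

lemma T_lam_E: "\<phi> (T_lam l) = \<phi> (E 0 1) + l \<cdot>\<^sub>m \<phi> (E 2 2)"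
  unfolding T_lam_eq_E by (simp only: add smult cstar_gen.smult E_mem_cstar_T)

lemma mat_adjoint_T_lam_E: "\<phi> (mat_adjoint (T_lam l)) = \<phi> (E 1 0) + cnj l \<cdot>\<^sub>m \<phi> (E 2 2)"
  unfolding mat_adjoint_T_lam_eq_E by (simp only: add smult cstar_gen.smult E_mem_cstar_T)

lemma pos_elem_opsys_E22:
  "\<phi> (pos_elem w) = \<phi> (1 \<cdot>\<^sub>m 1\<^sub>m 3 + (- cnj w) \<cdot>\<^sub>m T_lam l + (- w) \<cdot>\<^sub>m mat_adjoint (T_lam l))
     + (- of_real (1 - 2 * Re (cnj w * l))) \<cdot>\<^sub>m \<phi> (E 2 2)"
  unfolding pos_elem_eq_opsys_E22[of w l]
  by (simp only: add smult cstar_gen.smult cstar_gen.gen opsys_memI E_mem_cstar_T)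

lemma qform_E22_eq_0_if_extends_rho_M2:
  assumes k: "k = 2" and ext: "\<forall>x\<in>opsys_T l. \<phi> x = rho_M2 x"
    and w: "w * cnj w = 1" and w_pos: "0 < 1 - 2 * Re (cnj w * l)"
  shows "qform 2 (\<phi> (E 2 2)) (coord2 0 1 1 w) = 0"
proof -
  define c where "c = 1 - 2 * Re (cnj w * l)"
  let ?s = "1 \<cdot>\<^sub>m 1\<^sub>m 3 + (- cnj w) \<cdot>\<^sub>m T_lam l + (- w) \<cdot>\<^sub>m mat_adjoint (T_lam l)"
  let ?v = "coord2 0 1 1 w" and ?R = "\<phi> (E 2 2)"
  have R: "psd 2 ?R" and P: "psd 2 (\<phi> (pos_elem w))"
    using psd[OF E22_mem_cstar_T E_diag_psd[of 2]] psd[OF pos_elem_mem_cstar_T pos_elem_psd[OF w]] k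
    by simp_all
  have "qform 2 (rho_M2 ?s) ?v = 1 - w * cnj w"
    by (simp add: qform_coord2 rho_M2_def T_lam_eq_E mat_adjoint_eq_mat E_def algebra_simps)
  then have "qform 2 (\<phi> (pos_elem w)) ?v = - of_real c * qform 2 ?R ?v"
    using k w carrier_E[of 2 2] unfolding pos_elem_opsys_E22 ext[rule_format, OF opsys_memI] c_def
    by (simp add: qform_add qform_smult)
  then have "0 \<le> - c * Re (qform 2 ?R ?v)"
    using psd_qformD[OF P, of ?v] psd_qformD[OF R, of ?v] by simp
  moreover have "0 < c"
    using w_pos by (simp add: c_def)
  ultimately have "Re (qform 2 ?R ?v) \<le> 0"
    by (simp add: mult_le_0_iff)
  then show ?thesis
    using psd_qformD[OF R, of ?v] by (simp add: complex_eq_iff)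
qed

lemma E22_eq_0_if_extends_rho_M2:
  assumes k: "k = 2" and ext: "\<forall>x\<in>opsys_T l. \<phi> x = rho_M2 x"
  shows "\<phi> (E 2 2) = 0\<^sub>m 2 2"
proof -
  obtain a :: complex where a: "a = 1 \<or> a = -1" "0 < 1 - 2 * Re (cnj a * l)"
    by (cases "Re l < 1/2") (use that[of 1] that[of "-1"] in auto)
  obtain b :: complex where b: "b = \<i> \<or> b = -\<i>" "0 < 1 - 2 * Re (cnj b * l)"
    by (cases "Im l < 1/2") (use that[of \<i>] that[of "-\<i>"] in auto)
  have "a * cnj a = 1" "b * cnj b = 1"
    using a(1) b(1) by auto
  then show ?thesis
    using psd_2_eq_0 psd[OF E22_mem_cstar_T E_diag_psd[of 2]] k a b
      qform_E22_eq_0_if_extends_rho_M2[OF k ext] by auto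
qed

lemma offdiag_E_if_extends_rho_M2:
  assumes k: "k = 2" and ext: "\<forall>x\<in>opsys_T l. \<phi> x = rho_M2 x"
  shows "\<phi> (E 0 1) = rho_M2 (E 0 1)" "\<phi> (E 1 0) = rho_M2 (E 1 0)"
proof -
  have R0: "\<phi> (E 2 2) = 0\<^sub>m 2 2"
    by (rule E22_eq_0_if_extends_rho_M2[OF k ext])
  have "\<phi> (E 0 1) = \<phi> (T_lam l)"
    using T_lam_E R0 carrier_E[of 0 1] k by simp
  also have "\<dots> = rho_M2 (E 0 1)"
    using ext mem_opsys[OF T_lam_carrier] by (auto intro!: eq_matI simp: rho_M2_def T_lam_eq_E E_def)
  finally show "\<phi> (E 0 1) = rho_M2 (E 0 1)" .
  have "\<phi> (E 1 0) = \<phi> (mat_adjoint (T_lam l))"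
    using mat_adjoint_T_lam_E R0 carrier_E[of 1 0] k by simp
  also have "\<dots> = rho_M2 (E 1 0)"
    using ext adjoint_mem_opsys[OF T_lam_carrier]
    by (auto intro!: eq_matI simp: rho_M2_def mat_adjoint_T_lam_eq_E E_def)
  finally show "\<phi> (E 1 0) = rho_M2 (E 1 0)" .
qed

lemma diag_E_if_extends_rho_M2:
  assumes k: "k = 2" and ext: "\<forall>x\<in>opsys_T l. \<phi> x = rho_M2 x"
  shows "\<phi> (E 0 0) = rho_M2 (E 0 0)" "\<phi> (E 1 1) = rho_M2 (E 1 1)"
proof -
  let ?P = "\<phi> (E 0 0)" and ?Q = "\<phi> (E 1 1)"
  note X = offdiag_E_if_extends_rho_M2(1)[OF k ext] and Y = offdiag_E_if_extends_rho_M2(2)[OF k ext]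
  have car: "\<phi> (E i j) \<in> carrier_mat 2 2" if "(i, j) \<in> {(0, 0), (0, 1), (1, 0), (1, 1), (2, 2)}" for i j
    using carrier_E[OF that] k by simp
  have I: "?P $$ (i, j) + ?Q $$ (i, j) = (if i = j then 1 else 0)" if "i < 2" "j < 2" for i j
    using arg_cong[OF unital_E, of "\<lambda>M. M $$ (i, j)"] car[of 0 0] car[of 1 1] car[of 2 2]
      E22_eq_0_if_extends_rho_M2[OF k ext] k that
    by simp
  have P: "psd 2 ?P" and Q: "psd 2 ?Q"
    using psd[OF E00_mem_cstar_T E_diag_psd[of 0]] psd[OF E11_mem_cstar_T E_diag_psd[of 1]] k by simp_all
  have "psd (2 * 2) (blockmat 2 2 (\<lambda>i j. \<phi> (E i j)))"
    using cp[OF _ E_blockmat_psd] E_mem_cstar_T k by (auto simp: less_2_cases)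
  \<comment> \<open>the Choi matrix tested at \<open>e\<^sub>0 - e\<^sub>3\<close> gives \<open>P\<^sub>0\<^sub>0 + Q\<^sub>1\<^sub>1 \<ge> 2\<close>\<close>
  from psd_coord2(2)[OF this, of 0 3 1 "-1"]
  have "0 \<le> Re (?P $$ (0, 0) - \<phi> (E 0 1) $$ (0, 1) - \<phi> (E 1 0) $$ (1, 0) + ?Q $$ (1, 1))"
    by (simp add: blockmat_def)
  then have diag: "?P $$ (0, 0) = 1" "?P $$ (1, 1) = 0" "?Q $$ (0, 0) = 0" "?Q $$ (1, 1) = 1"
    using X Y I[of 0 0] I[of 1 1] psd_diag[OF P, of 0] psd_diag[OF P, of 1] psd_diag[OF Q, of 0]
      psd_diag[OF Q, of 1]
    by (auto simp: rho_M2_E complex_eq_iff)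
  have P_off: "?P $$ (0, 1) = 0" "?P $$ (1, 0) = 0"
    using psd_offdiag_eq_0[OF P, of 0 1] diag by simp_all
  moreover have "?Q $$ (0, 1) = 0" "?Q $$ (1, 0) = 0"
    using I[of 0 1] I[of 1 0] P_off by simp_all
  ultimately show "?P = rho_M2 (E 0 0)" "?Q = rho_M2 (E 1 1)"
    using diag car[of 0 0] car[of 1 1] by (auto intro!: eq_matI simp: rho_M2_E less_2_cases)
qed

lemma eq_rho_M2_if_extends:
  assumes k: "k = 2" and ext: "\<forall>x\<in>opsys_T l. \<phi> x = rho_M2 x" and x: "x \<in> cstar_T l"
  shows "\<phi> x = rho_M2 x"
  unfolding expand[OF x] diag_E_if_extends_rho_M2[OF k ext] offdiag_E_if_extends_rho_M2[OF k ext] E22_eq_0_if_extends_rho_M2[OF k ext]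
  by (intro eq_matI) (auto simp: rho_M2_def E_def less_2_cases)

lemma E22_eq_1_if_extends_rho_C:
  assumes k: "k = 1" and ext: "\<forall>x\<in>opsys_T l. \<phi> x = rho_C x" and large: "1 / 2 < cmod l"
  shows "\<phi> (E 2 2) = 1\<^sub>m 1"
proof -
  define w where "w = l / of_real (cmod l)"
  define c where "c = 1 - 2 * cmod l"
  define r where "r = \<phi> (E 2 2) $$ (0, 0)"
  have car: "\<phi> (E i j) \<in> carrier_mat 1 1" if "(i, j) \<in> {(0, 0), (0, 1), (1, 0), (1, 1), (2, 2)}" for i j
    using carrier_E[OF that] k by simp
  have "l * cnj l = of_real ((cmod l)\<^sup>2)"
    by (metis complex_norm_square)
  then have w: "w * cnj w = 1" and wl: "cnj w * l = of_real (cmod l)" "w * cnj l = of_real (cmod l)"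
    using large by (auto simp: w_def field_simps power2_eq_square)
  have "\<phi> (pos_elem w) $$ (0, 0) = (1 - cnj w * l - w * cnj l) - of_real (1 - 2 * Re (cnj w * l)) * r"
    using car[of 2 2] k unfolding pos_elem_opsys_E22 ext[rule_format, OF opsys_memI] r_def
    by (simp add: rho_C_def T_lam_eq_E mat_adjoint_eq_mat E_def algebra_simps)
  also have "\<dots> = of_real c * (1 - r)"
    unfolding wl c_def by (simp add: algebra_simps)
  finally have pos: "0 \<le> c * (1 - Re r)"
    using psd_diag[OF psd[OF pos_elem_mem_cstar_T pos_elem_psd[OF w]], of 0] k by simp
  have unit: "\<phi> (E 0 0) $$ (0, 0) + \<phi> (E 1 1) $$ (0, 0) + r = 1"
    using arg_cong[OF unital_E, of "\<lambda>M. M $$ (0, 0)"] car[of 0 0] car[of 1 1] car[of 2 2] k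
    unfolding r_def by (simp add: add.assoc)
  have "Im r = 0" "Re r \<le> 1"
    using unit psd_diag[OF psd[OF E00_mem_cstar_T E_diag_psd[of 0]], of 0]
      psd_diag[OF psd[OF E11_mem_cstar_T E_diag_psd[of 1]], of 0] k
    by (auto simp: complex_eq_iff)
  moreover have "1 \<le> Re r"
    using pos large unfolding c_def by (simp add: zero_le_mult_iff)
  ultimately have "r = 1"
    by (simp add: complex_eq_iff)
  then show ?thesis
    using car[of 2 2] unfolding r_def by (auto intro!: eq_matI)
qed

lemma eq_rho_C_if_extends:
  assumes k: "k = 1" and ext: "\<forall>x\<in>opsys_T l. \<phi> x = rho_C x" and large: "1 / 2 < cmod l"
    and x: "x \<in> cstar_T l"
  shows "\<phi> x = rho_C x"
proof -
  have R1: "\<phi> (E 2 2) = 1\<^sub>m 1"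
    by (rule E22_eq_1_if_extends_rho_C[OF k ext large])
  have car: "\<phi> (E i j) \<in> carrier_mat 1 1" if "(i, j) \<in> {(0, 0), (0, 1), (1, 0), (1, 1), (2, 2)}" for i j
    using carrier_E[OF that] k by simp
  have "\<phi> (E 0 0) $$ (0, 0) + \<phi> (E 1 1) $$ (0, 0) = 0"
    using arg_cong[OF unital_E, of "\<lambda>M. M $$ (0, 0)"] car[of 0 0] car[of 1 1] R1 k by simp
  then have diag: "\<phi> (E 0 0) $$ (0, 0) = 0" "\<phi> (E 1 1) $$ (0, 0) = 0"
    using psd_diag[OF psd[OF E00_mem_cstar_T E_diag_psd[of 0]], of 0]
      psd_diag[OF psd[OF E11_mem_cstar_T E_diag_psd[of 1]], of 0] k
    by (auto simp: complex_eq_iff)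
  have offdiag: "\<phi> (E 0 1) $$ (0, 0) = 0" "\<phi> (E 1 0) $$ (0, 0) = 0"
    using arg_cong[OF T_lam_E, of "\<lambda>M. M $$ (0, 0)"] arg_cong[OF mat_adjoint_T_lam_E, of "\<lambda>M. M $$ (0, 0)"]
      ext mem_opsys[OF T_lam_carrier] adjoint_mem_opsys[OF T_lam_carrier] car[of 0 1] car[of 1 0] R1
    by (simp_all add: rho_C_def T_lam_eq_E mat_adjoint_eq_mat E_def)
  show ?thesis
    unfolding expand[OF x] R1 using diag offdiag car[of 0 0] car[of 0 1] car[of 1 0] car[of 1 1]
    by (intro eq_matI) (auto simp: rho_C_def)
qed

end

lemma boundary_rep_rho_M2: "boundary_rep 3 (opsys_T l) 2 rho_M2"
  unfolding boundary_rep_def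
proof (intro conjI irreducible_rep_rho_M2 allI impI ballI)
  fix \<phi> x assume "ucp 3 (cstar_T l) 2 \<phi> \<and> (\<forall>x\<in>opsys_T l. \<phi> x = rho_M2 x)" "x \<in> cstar_T l"
  then show "\<phi> x = rho_M2 x"
    using ucp_cstar_T.eq_rho_M2_if_extends[of l 2 \<phi>] by (simp add: ucp_cstar_T_def)
qed

lemma boundary_rep_rho_C:
  assumes "1 / 2 < cmod l" shows "boundary_rep 3 (opsys_T l) 1 rho_C"
  unfolding boundary_rep_def
proof (intro conjI irreducible_rep_rho_C allI impI ballI)
  fix \<phi> x assume "ucp 3 (cstar_T l) 1 \<phi> \<and> (\<forall>x\<in>opsys_T l. \<phi> x = rho_C x)" "x \<in> cstar_T l"
  then show "\<phi> x = rho_C x"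
    using ucp_cstar_T.eq_rho_C_if_extends[of l 1 \<phi>] assms by (simp add: ucp_cstar_T_def)
qed

lemma unit_vector_with_product:
  assumes "cmod l \<le> 1 / 2"
  obtains a b :: complex where "cnj a * a + cnj b * b = 1" "cnj a * b = l"
proof -
  define s where "s = sqrt (1 - 4 * (cmod l)\<^sup>2)"
  define t where "t = (1 + s) / 2"
  have "(cmod l)\<^sup>2 \<le> (1 / 2)\<^sup>2"
    using assms by (intro power_mono) simp_all
  then have "s\<^sup>2 = 1 - 4 * (cmod l)\<^sup>2" "0 \<le> s"
    unfolding s_def by (simp_all add: power_divide)
  then have t: "0 < t" "t\<^sup>2 - t + (cmod l)\<^sup>2 = 0"
    unfolding t_def by (simp_all add: power2_eq_square field_simps)
  define a where "a = complex_of_real (sqrt t)"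
  have a: "cnj a = a" "a * a = of_real t" "a \<noteq> 0"
    using t(1) by (simp_all add: a_def flip: of_real_mult)
  have "cnj l * l = of_real ((cmod l)\<^sup>2)"
    by (metis complex_norm_square mult.commute)
  then have "cnj a * a + cnj (l / a) * (l / a) = of_real (t + (cmod l)\<^sup>2 / t)"
    using a by (simp add: field_simps)
  also have "t + (cmod l)\<^sup>2 / t = 1"
    using t by (simp add: field_simps power2_eq_square) algebra
  finally show ?thesis
    using that[of a "l / a"] a by simp
qed

lemma qform_opsys_T_eq_entry22:
  assumes ab: "cnj a * a + cnj b * b = 1" "cnj a * b = l" and x: "x \<in> opsys_T l"
  shows "qform 3 x (coord2 0 1 a b) = x $$ (2, 2)"
proof -
  obtain p q r where x_eq: "x = p \<cdot>\<^sub>m 1\<^sub>m 3 + q \<cdot>\<^sub>m T_lam l + r \<cdot>\<^sub>m mat_adjoint (T_lam l)"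
    using x unfolding opsys_def by blast
  have "cnj b * a = cnj l"
    using arg_cong[OF ab(2), of cnj] by (simp add: mult.commute)
  have "qform 3 x (coord2 0 1 a b) = p * (cnj a * a + cnj b * b) + q * (cnj a * b) + r * (cnj b * a)"
    unfolding x_eq by (simp add: qform_coord2 T_lam_eq_E mat_adjoint_eq_mat E_def algebra_simps)
  also have "\<dots> = x $$ (2, 2)"
    unfolding ab \<open>cnj b * a = cnj l\<close> x_eq by (simp add: T_lam_eq_E mat_adjoint_eq_mat E_def)
  finally show ?thesis .
qed

lemma E22_central:
  assumes "x \<in> cstar_T l"
  shows "E 2 2 * x = x * E 2 2" "x * E 2 2 = x $$ (2, 2) \<cdot>\<^sub>m E 2 2"
  using assms unfolding cstar_T_eq_M2_plus_C
  by (auto intro!: eq_matI simp: M2_plus_C_def E_def scalar_prod_def sum_atLeast0_lessThan_3 less_3_cases)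

lemma star_rep_eq_entry22_if_E22_eq_1:
  assumes rep: "star_rep 3 (cstar_T l) k \<rho>" and one: "\<rho> (E 2 2) = 1\<^sub>m k" and x: "x \<in> cstar_T l"
  shows "\<rho> x = x $$ (2, 2) \<cdot>\<^sub>m 1\<^sub>m k"
proof -
  have "\<rho> x = \<rho> (x * E 2 2)"
    using rep x E22_mem_cstar_T one unfolding star_rep_def by auto
  also have "\<dots> = x $$ (2, 2) \<cdot>\<^sub>m 1\<^sub>m k"
    using rep E22_mem_cstar_T one E22_central(2)[OF x] unfolding star_rep_def lin_on_def by simp
  finally show ?thesis .
qed

lemma boundary_rep_E22_eq_0:
  assumes small: "cmod l \<le> 1 / 2" and bd: "boundary_rep 3 (opsys_T l) k \<rho>"
  shows "\<rho> (E 2 2) = 0\<^sub>m k k"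
proof -
  have irr: "irreducible_rep 3 (cstar_T l) k \<rho>"
    and ext: "\<And>\<psi>. ucp 3 (cstar_T l) k \<psi> \<Longrightarrow> \<forall>x\<in>opsys_T l. \<psi> x = \<rho> x \<Longrightarrow> \<forall>x\<in>cstar_T l. \<psi> x = \<rho> x"
    using bd unfolding boundary_rep_def by blast+
  then have rep: "star_rep 3 (cstar_T l) k \<rho>" and "0 < k"
    unfolding irreducible_rep_def by blast+
  have "\<rho> (E 2 2) = 0\<^sub>m k k \<or> \<rho> (E 2 2) = 1\<^sub>m k"
    using E22_central by (intro irreducible_rep_central_projection[OF irr E22_mem_cstar_T])
      (simp_all add: E_mult_E mat_adjoint_E)
  moreover have "\<rho> (E 2 2) \<noteq> 1\<^sub>m k"
  proof
    assume one: "\<rho> (E 2 2) = 1\<^sub>m k"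
    obtain a b where ab: "cnj a * a + cnj b * b = 1" "cnj a * b = l"
      using unit_vector_with_product[OF small] by blast
    let ?\<psi> = "\<lambda>x. qform 3 x (coord2 0 1 a b) \<cdot>\<^sub>m 1\<^sub>m k"
    have "qform 3 (1\<^sub>m 3) (coord2 0 1 a b) = 1"
      using ab(1) by (simp add: qform_coord2)
    then have "ucp 3 (cstar_T l) k ?\<psi>"
      by (intro ucp_vector_state) (auto simp: cstar_T_eq_M2_plus_C M2_plus_C_def)
    moreover have "\<forall>x\<in>opsys_T l. ?\<psi> x = \<rho> x"
      using qform_opsys_T_eq_entry22[OF ab] star_rep_eq_entry22_if_E22_eq_1[OF rep one]
        cstar_gen.gen by simp
    ultimately have "?\<psi> (E 2 2) = \<rho> (E 2 2)"
      using ext E22_mem_cstar_T by blast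
    then have "(0 :: complex) \<cdot>\<^sub>m 1\<^sub>m k = 1\<^sub>m k"
      unfolding one by (simp add: qform_coord2 E_def)
    from arg_cong[OF this, of "\<lambda>M. M $$ (0, 0)"] show False
      using \<open>0 < k\<close> by simp
  qed
  ultimately show ?thesis
    by blast
qed

section \<open>The Silov ideal\<close>

lemma kernel_rho_M2:
  assumes "x \<in> cstar_T l" "rho_M2 x = 0\<^sub>m 2 2"
  shows "x = x $$ (2, 2) \<cdot>\<^sub>m E 2 2"
proof -
  have "x $$ (i, j) = 0" if "i < 2" "j < 2" for i j
    using arg_cong[OF assms(2), of "\<lambda>M. M $$ (i, j)"] that by (simp add: rho_M2_def)
  then show ?thesis
    using assms(1) unfolding cstar_T_eq_M2_plus_C M2_plus_C_def
    by (intro eq_matI) (auto simp: E_def less_3_cases)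
qed

lemma silov_ideal_small:
  assumes "cmod l \<le> 1 / 2"
  shows "silov_ideal 3 (opsys_T l) = {x \<in> cstar_T l. rho_M2 x = 0\<^sub>m 2 2}"
proof
  show "silov_ideal 3 (opsys_T l) \<subseteq> {x \<in> cstar_T l. rho_M2 x = 0\<^sub>m 2 2}"
    using boundary_rep_rho_M2 unfolding silov_ideal_def by blast
  show "{x \<in> cstar_T l. rho_M2 x = 0\<^sub>m 2 2} \<subseteq> silov_ideal 3 (opsys_T l)"
  proof (clarsimp simp: silov_ideal_def)
    fix x k \<rho> assume x: "x \<in> cstar_T l" "rho_M2 x = 0\<^sub>m 2 2" and bd: "boundary_rep 3 (opsys_T l) k \<rho>"
    have "\<rho> x = \<rho> (x $$ (2, 2) \<cdot>\<^sub>m E 2 2)"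
      using kernel_rho_M2[OF x] by (rule arg_cong)
    also have "\<dots> = x $$ (2, 2) \<cdot>\<^sub>m \<rho> (E 2 2)"
      using bd E22_mem_cstar_T unfolding boundary_rep_def irreducible_rep_def star_rep_def lin_on_def by blast
    also have "\<dots> = 0\<^sub>m k k"
      unfolding boundary_rep_E22_eq_0[OF assms bd] by simp
    finally show "\<rho> x = 0\<^sub>m k k" .
  qed
qed

lemma silov_ideal_large:
  assumes "1 / 2 < cmod l"
  shows "silov_ideal 3 (opsys_T l) = {0\<^sub>m 3 3}"
proof
  show "silov_ideal 3 (opsys_T l) \<subseteq> {0\<^sub>m 3 3}"
  proof
    fix x assume "x \<in> silov_ideal 3 (opsys_T l)"
    then have x: "x \<in> M2_plus_C" "rho_M2 x = 0\<^sub>m 2 2" "rho_C x = 0\<^sub>m 1 1"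
      using boundary_rep_rho_M2 boundary_rep_rho_C[OF assms] cstar_T_eq_M2_plus_C
      unfolding silov_ideal_def by blast+
    have "x $$ (i, j) = 0" if "i < 2" "j < 2" for i j
      using arg_cong[OF x(2), of "\<lambda>M. M $$ (i, j)"] that by (simp add: rho_M2_def)
    moreover have "x $$ (2, 2) = 0"
      using arg_cong[OF x(3), of "\<lambda>M. M $$ (0, 0)"] by (simp add: rho_C_def)
    ultimately show "x \<in> {0\<^sub>m 3 3}"
      using x(1) unfolding M2_plus_C_def by (auto intro!: eq_matI simp: less_3_cases)
  qed
  have "(0 :: complex) \<cdot>\<^sub>m 1\<^sub>m 3 \<in> cstar_T l" "(0 :: complex) \<cdot>\<^sub>m 1\<^sub>m 3 = 0\<^sub>m 3 3"
    by (auto intro!: cstar_gen.smult cstar_gen.one eq_matI)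
  then have "0\<^sub>m 3 3 \<in> cstar_T l"
    by simp
  then show "{0\<^sub>m 3 3} \<subseteq> silov_ideal 3 (opsys_T l)"
    unfolding silov_ideal_def boundary_rep_def irreducible_rep_def
    using star_rep_zero cstar_gen.one by blast
qed

theorem mainTheorem5:
  fixes l :: complex
  shows "(cmod l \<le> 1/2 \<longrightarrow> cenv_iso 3 (opsys 3 (T_lam l)) (carrier_mat 2 2) 2) \<and>
         (cmod l > 1/2 \<longrightarrow> cenv_iso 3 (opsys 3 (T_lam l)) M2_plus_C 3)"
proof (intro conjI impI)
  assume small: "cmod l \<le> 1/2"
  have "star_hom_onto (cstar_T l) (carrier_mat 2 2) rho_M2"
    using star_rep_rho_M2 rho_M2_onto unfolding star_hom_onto_def star_rep_def by blast
  then show "cenv_iso 3 (opsys 3 (T_lam l)) (carrier_mat 2 2) 2"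
    unfolding cenv_iso_def silov_ideal_small[OF small] by blast
next
  assume large: "cmod l > 1/2"
  have "star_hom_onto (cstar_T l) M2_plus_C (\<lambda>x. x)"
    unfolding star_hom_onto_def lin_on_def cstar_T_eq_M2_plus_C by simp
  moreover have "{x \<in> cstar_T l. x = 0\<^sub>m 3 3} = silov_ideal 3 (opsys_T l)"
    unfolding silov_ideal_large[OF large] cstar_T_eq_M2_plus_C by (auto simp: M2_plus_C_def)
  ultimately show "cenv_iso 3 (opsys 3 (T_lam l)) M2_plus_C 3"
    unfolding cenv_iso_def by blast
qed

end
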